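(* Let $\mathcal{A}$ be a cubical $k$-way tensor of dimension $n$ that is general symmetric with respect to a permutation matrix $P$, i.e. $P\,\mathrm{vec}(\mathcal{A})=\mathrm{vec}(\mathcal{A})$ where $P$ corresponds with a general symmetry. Fix a degree $d$ and cubical factor dimensions: $n^{(i)}_1=\cdots=n^{(i)}_k=m_i$ with $\prod_{i=1}^d m_i=n$, and let $P_1,\dots,P_d$ be permutation matrices with $P=Q^T(P_d\otimes\cdots\otimes P_1)Q$. Suppose $\tilde{\mathcal{A}}=\sum_{j=1}^R\sigma_j\,a^{(1)}_j\circ\cdots\circ a^{(d)}_j$ is a polyadic decomposition with $\|a^{(i)}_j\|_2=1$ for all $i,j$ and with mutually orthogonal rank-1 terms, and let $\mathcal{A}^{(i)}_j$ be the $m_i\times\cdots\times m_i$ ($k$-way) tensor with $\mathrm{vec}(\mathcal{A}^{(i)}_j)=a^{(i)}_j$, so that $\mathcal{A}=\sum_{j=1}^R\sigma_j\,\mathcal{A}^{(d)}_j\otimes\cdots\otimes\mathcal{A}^{(1)}_j$. Assume Condition 1: the $\sigma_j$ are pairwise distinct and, for every $l\in\{1,\dots,R\}$ and every $j\neq l$, $\sigma_j\prod_{i=1}^d (a^{(i)}_l)^TP_i\,a^{(i)}_j=0$. Then each factor $\mathcal{A}^{(i)}_j$ is either general symmetric or general skew-symmetric, i.e. $P_i\,\mathrm{vec}(\mathcal{A}^{(i)}_j)=\pm\mathrm{vec}(\mathcal{A}^{(i)}_j)$, and in each term $j$ the number of indices $i$ for which $\mathcal{A}^{(i)}_j$ is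 general skew-symmetric is either zero or even.
   Context: Grouped index convention: $[j_1\cdots j_m]$ denotes the linear index with the first index varying fastest, and $\mathrm{vec}(\mathcal{B})_{[j_1\cdots j_k]}=\mathcal{B}_{j_1\cdots j_k}$. The outer product $a^{(1)}\circ\cdots\circ a^{(d)}$ has entries $a^{(1)}_{l_1}\cdots a^{(d)}_{l_d}$; two tensors are orthogonal if the sum of entrywise products is zero. Tensor Kronecker product of $k$-way tensors: $(\mathcal{B}\otimes\mathcal{C})_{[i_1i_{k+1}]\cdots[i_ki_{2k}]}=\mathcal{B}_{i_{k+1}\cdots i_{2k}}\mathcal{C}_{i_1\cdots i_k}$. Given degree $d$ and dimensions $n^{(i)}_r$ with $\prod_i n^{(i)}_r=n$, the permuted tensor $\tilde{\mathcal{A}}$ has entries $\tilde{\mathcal{A}}_{[i^{(1)}_1\cdots i^{(1)}_k]\cdots[i^{(d)}_1\cdots i^{(d)}_k]}=\mathcal{A}_{[i^{(1)}_1\cdots i^{(d)}_1]\cdots[i^{(1)}_k\cdots i^{(d)}_k]}$, and $Q$ is the permutation matrix with $Q\,\mathrm{vec}(\mathcal{A})=\mathrm{vec}(\tilde{\mathcal{A}})$. A permutation matrix $P$ of size $n^k$ corresponds with a general symmetry if for every degree $d$ and every such choice of dimensions there are permutation matrices $P_1,\dots,P_d$, $P_i$ of size $\prod_r n^{(i)}_r$, with $P=Q^T(P_d\otimes\cdots\otimes P_1)Q$ (matrix Kronecker product). A factor $\mathcal{A}^{(i)}_j$ is called general symmetric (resp. general skew-symmetric) here if $P_i\,\mathrm{vec}(\mathcal{A}^{(i)}_j)=\mathrm{vec}(\mathcal{A}^{(i)}_j)$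 (resp. $=-\mathrm{vec}(\mathcal{A}^{(i)}_j)$). *)

theory Defs
  imports Complex_Main "HOL-Library.FuncSet"
begin

text \<open>All indices are 0-based. Real matrices of size N are
functions nat => nat => real (only entries with both indices < N matter),
real vectors of length N are functions nat => real (only entries < N matter).
Grouped (linear) indices use mixed radix with the first index varying fastest.\<close>

type_synonym rmat = "nat \<Rightarrow> nat \<Rightarrow> real"
type_synonym rvec = "nat \<Rightarrow> real"

definition lin :: "(nat \<Rightarrow> nat) \<Rightarrow> (nat \<Rightarrow> nat) \<Rightarrow> nat \<Rightarrow> nat" where
  "lin rad dig len = (\<Sum>t<len. dig t * (\<Prod>u<t. rad u))"

definition mat_vec :: "nat \<Rightarrow> rmat \<Rightarrow> rvec \<Rightarrow> rvec" where
  "mat_vec N M x = (\<lambda>i. \<Sum>j<N. M i j * x j)"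

definition mat_mul :: "nat \<Rightarrow> rmat \<Rightarrow> rmat \<Rightarrow> rmat" where
  "mat_mul N A B = (\<lambda>i j. \<Sum>l<N. A i l * B l j)"

definition mat_transpose :: "rmat \<Rightarrow> rmat" where
  "mat_transpose A = (\<lambda>i j. A j i)"

definition mat_eq :: "nat \<Rightarrow> rmat \<Rightarrow> rmat \<Rightarrow> bool" where
  "mat_eq N A B \<longleftrightarrow> (\<forall>i<N. \<forall>j<N. A i j = B i j)"

definition vec_eq :: "nat \<Rightarrow> rvec \<Rightarrow> rvec \<Rightarrow> bool" where
  "vec_eq N x y \<longleftrightarrow> (\<forall>i<N. x i = y i)"

definition inner_vec :: "nat \<Rightarrow> rvec \<Rightarrow> rvec \<Rightarrow> real" where
  "inner_vec N x y = (\<Sum>i<N. x i * y i)"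

definition perm_mat :: "nat \<Rightarrow> rmat \<Rightarrow> bool" where
  "perm_mat N M \<longleftrightarrow>
     (\<forall>i<N. \<forall>j<N. M i j = 0 \<or> M i j = 1) \<and>
     (\<forall>i<N. \<exists>!j. j < N \<and> M i j = 1) \<and>
     (\<forall>j<N. \<exists>!i. i < N \<and> M i j = 1)"

definition kron :: "rmat \<Rightarrow> nat \<Rightarrow> rmat \<Rightarrow> rmat" where
  "kron B sC C = (\<lambda>i j. B (i div sC) (j div sC) * C (i mod sC) (j mod sC))"

text \<open>kron_list M Ps d = P_d \<otimes> ... \<otimes> P_1, where P_(i+1) = Ps i has size M i.\<close>
fun kron_list :: "(nat \<Rightarrow> nat) \<Rightarrow> (nat \<Rightarrow> rmat) \<Rightarrow> nat \<Rightarrow> rmat" where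
  "kron_list M Ps 0 = (\<lambda>i j. if i = 0 \<and> j = 0 then 1 else 0)"
| "kron_list M Ps (Suc d) = kron (Ps d) (\<Prod>i<d. M i) (kron_list M Ps d)"

text \<open>The permutation matrix Q for k-way tensors, degree d and dimensions
N i r = n^(i+1)_(r+1) (i < d, r < k):  Q vec(A) = vec(A~), i.e. Q has a 1 at
(s,t) iff s is the linear index of an entry of A~ and t the linear index of the
corresponding entry of A.\<close>
definition Qmat :: "nat \<Rightarrow> nat \<Rightarrow> (nat \<Rightarrow> nat \<Rightarrow> nat) \<Rightarrow> rmat" where
  "Qmat k d N = (\<lambda>s t.
     if (\<exists>x :: nat \<Rightarrow> nat \<Rightarrow> nat. (\<forall>i<d. \<forall>r<k. x i r < N i r) \<and>
            s = lin (\<lambda>i. \<Prod>r<k. N i r) (\<lambda>i. lin (N i) (x i) k) d \<and>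
            t = lin (\<lambda>r. \<Prod>i<d. N i r) (\<lambda>r. lin (\<lambda>i. N i r) (\<lambda>i. x i r) d) k)
     then 1 else 0)"

definition general_symmetry :: "nat \<Rightarrow> nat \<Rightarrow> rmat \<Rightarrow> bool" where
  "general_symmetry k n P \<longleftrightarrow>
     (\<forall>(d::nat) (N :: nat \<Rightarrow> nat \<Rightarrow> nat). (\<forall>r<k. (\<Prod>i<d. N i r) = n) \<longrightarrow>
       (\<exists>Ps :: nat \<Rightarrow> rmat. (\<forall>i<d. perm_mat (\<Prod>r<k. N i r) (Ps i)) \<and>
          mat_eq (n ^ k) P
            (mat_mul (n ^ k) (mat_transpose (Qmat k d N))
               (mat_mul (n ^ k) (kron_list (\<lambda>i. \<Prod>r<k. N i r) Ps d) (Qmat k d N)))))"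

end

theory Submission
  imports Defs
begin

text \<open>Pulling P = Q^T (P_d \<otimes> ... \<otimes> P_1) Q through the permutation Q turns P vec(A) = vec(A)
into invariance of the permuted tensor A~ under the Kronecker operator P_d \<otimes> ... \<otimes> P_1.
Pairing A~ with its j-th rank-one term then yields \<sigma>_j in two ways: directly, by orthonormality
of the terms, and after applying the Kronecker operator, where Condition 1 kills every cross term,
as \<sigma>_j \<Prod>_i <a_j^(i), P_i a_j^(i)>. So this product is 1. Each factor is the inner product of a
unit vector with a permutation of itself, hence lies in [-1, 1] and equals 1 or -1 exactly when
P_i a_j^(i) = a_j^(i) or P_i a_j^(i) = -a_j^(i). A product of such factors equal to 1 forces all of
them to be 1 or -1, with an even number of -1.\<close>

section \<open>Mixed-radix indices\<close>

lemma lin_Suc: "lin rad dig (Suc len) = lin rad dig len + dig len * (\<Prod>u<len. rad u)"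
  by (simp add: lin_def)

lemma lin_cong: "(\<And>t. t < len \<Longrightarrow> d1 t = d2 t) \<Longrightarrow> lin rad d1 len = lin rad d2 len"
  unfolding lin_def by (intro sum.cong) auto

lemma lin_less_prod: "\<forall>t<len. dig t < rad t \<Longrightarrow> lin rad dig len < (\<Prod>u<len. rad u)"
proof (induction len)
  case 0 then show ?case by (simp add: lin_def)
next
  case (Suc len)
  define P where "P = (\<Prod>u<len. rad u)"
  have "lin rad dig (Suc len) = lin rad dig len + dig len * P" by (simp add: lin_Suc P_def)
  also have "\<dots> < P + dig len * P" using Suc by (simp add: P_def)
  also have "\<dots> = (dig len + 1) * P" by simp
  also have "\<dots> \<le> rad len * P" using Suc.prems by (intro mult_right_mono) (auto simp: Suc_le_eq)
  finally show ?case by (simp add: P_def mult.commute)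
qed

lemma lin_inj: "\<forall>t<len. d1 t < rad t \<Longrightarrow> \<forall>t<len. d2 t < rad t \<Longrightarrow>
   lin rad d1 len = lin rad d2 len \<Longrightarrow> \<forall>t<len. d1 t = d2 t"
proof (induction len)
  case 0 then show ?case by simp
next
  case (Suc len)
  define P where "P = (\<Prod>u<len. rad u)"
  have less: "lin rad d1 len < P" "lin rad d2 len < P"
    using Suc.prems by (auto intro!: lin_less_prod simp: P_def)
  have eq: "lin rad d1 len + d1 len * P = lin rad d2 len + d2 len * P"
    using Suc.prems(3) by (simp add: lin_Suc P_def)
  have "(lin rad d1 len + d1 len * P) mod P = (lin rad d2 len + d2 len * P) mod P" using eq by simp
  then have "lin rad d1 len = lin rad d2 len" using less by simp
  then have "\<forall>t<len. d1 t = d2 t" using Suc by auto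
  moreover have "(lin rad d1 len + d1 len * P) div P = (lin rad d2 len + d2 len * P) div P"
    using eq by simp
  then have "d1 len = d2 len" using less by simp
  ultimately show ?case by (auto simp: less_Suc_eq)
qed

lemma lin_surj: "y < (\<Prod>u<len. rad u) \<Longrightarrow> \<exists>dig. (\<forall>t<len. dig t < rad t) \<and> lin rad dig len = y"
proof (induction len arbitrary: y)
  case 0 then show ?case by (simp add: lin_def)
next
  case (Suc len)
  define P where "P = (\<Prod>u<len. rad u)"
  have y: "y < P * rad len" using Suc.prems by (simp add: P_def)
  then have "P > 0" by (cases "P = 0") auto
  then have "y mod P < P" by simp
  then obtain d0 where d0: "\<forall>t<len. d0 t < rad t" "lin rad d0 len = y mod P"
    using Suc.IH[of "y mod P"] by (auto simp: P_def)
  define dig where "dig = d0(len := y div P)"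
  have "y div P < rad len" using y by (simp add: less_mult_imp_div_less mult.commute)
  then have "\<forall>t<Suc len. dig t < rad t" using d0 by (auto simp: dig_def less_Suc_eq)
  moreover have "lin rad dig len = lin rad d0 len" by (intro lin_cong) (auto simp: dig_def)
  then have "lin rad dig (Suc len) = y" using d0 by (simp add: lin_Suc P_def[symmetric] dig_def)
  ultimately show ?case by blast
qed

lemma bij_betw_lin:
  "bij_betw (\<lambda>l. lin rad l len) (\<Pi>\<^sub>E t\<in>{..<len}. {..<rad t}) {..<\<Prod>t<len. rad t}"
proof (rule bij_betwI')
  fix l l' assume l: "l \<in> (\<Pi>\<^sub>E t\<in>{..<len}. {..<rad t})" and l': "l' \<in> (\<Pi>\<^sub>E t\<in>{..<len}. {..<rad t})"
  show "(lin rad l len = lin rad l' len) = (l = l')"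
  proof
    assume "lin rad l len = lin rad l' len"
    then have "\<forall>t<len. l t = l' t" using l l' by (intro lin_inj) auto
    then show "l = l'" using l l' by (intro PiE_ext) auto
  qed simp
next
  fix l assume "l \<in> (\<Pi>\<^sub>E t\<in>{..<len}. {..<rad t})"
  then show "lin rad l len \<in> {..<\<Prod>t<len. rad t}" by (auto intro!: lin_less_prod)
next
  fix y assume "y \<in> {..<\<Prod>t<len. rad t}"
  then obtain dig where dig: "\<forall>t<len. dig t < rad t" "lin rad dig len = y"
    using lin_surj by blast
  have "restrict dig {..<len} \<in> (\<Pi>\<^sub>E t\<in>{..<len}. {..<rad t})" using dig by auto
  moreover have "lin rad (restrict dig {..<len}) len = lin rad dig len"
    by (rule lin_cong) simp
  ultimately show "\<exists>l\<in>\<Pi>\<^sub>E t\<in>{..<len}. {..<rad t}. y = lin rad l len"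
    using dig(2) by metis
qed

text \<open>Linear index of a digit array x with x i r < N i r, where the digits x i r (r < k) of
block i form the fast inner index. Qmat pairs the nested index of x with that of its transpose.\<close>

definition nested_lin :: "nat \<Rightarrow> nat \<Rightarrow> (nat \<Rightarrow> nat \<Rightarrow> nat) \<Rightarrow> (nat \<Rightarrow> nat \<Rightarrow> nat) \<Rightarrow> nat" where
  "nested_lin d k N x = lin (\<lambda>i. \<Prod>r<k. N i r) (\<lambda>i. lin (N i) (x i) k) d"

lemma Qmat_eq_nested_lin:
  "Qmat k d N s t =
     (if \<exists>x. (\<forall>i<d. \<forall>r<k. x i r < N i r) \<and> s = nested_lin d k N x \<and>
            t = nested_lin k d (\<lambda>r i. N i r) (\<lambda>r i. x i r)
      then 1 else 0)"
  by (simp add: Qmat_def nested_lin_def)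

lemma nested_lin_less:
  assumes "\<forall>i<d. \<forall>r<k. x i r < N i r"
  shows "nested_lin d k N x < (\<Prod>i<d. \<Prod>r<k. N i r)"
  unfolding nested_lin_def using assms by (intro lin_less_prod allI impI) simp

lemma nested_lin_inj:
  assumes "\<forall>i<d. \<forall>r<k. x i r < N i r" "\<forall>i<d. \<forall>r<k. y i r < N i r"
    and "nested_lin d k N x = nested_lin d k N y"
  shows "\<forall>i<d. \<forall>r<k. x i r = y i r"
proof (intro allI impI)
  fix i r assume i: "i < d" and r: "r < k"
  have "\<forall>i<d. lin (N i) (x i) k < (\<Prod>r<k. N i r)" "\<forall>i<d. lin (N i) (y i) k < (\<Prod>r<k. N i r)"
    using assms(1,2) by (simp_all add: lin_less_prod)
  then have "\<forall>i<d. lin (N i) (x i) k = lin (N i) (y i) k"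
    using assms(3) unfolding nested_lin_def by (rule lin_inj)
  then have "\<forall>r<k. x i r = y i r" using assms(1,2) i by (intro lin_inj[where rad = "N i"]) simp_all
  then show "x i r = y i r" using r by simp
qed

lemma nested_lin_cong:
  "\<forall>i<d. \<forall>r<k. x i r = y i r \<Longrightarrow> nested_lin d k N x = nested_lin d k N y"
  unfolding nested_lin_def by (intro lin_cong) simp

lemma nested_lin_surj:
  assumes "s < (\<Prod>i<d. \<Prod>r<k. N i r)"
  shows "\<exists>x. (\<forall>i<d. \<forall>r<k. x i r < N i r) \<and> nested_lin d k N x = s"
proof -
  obtain y where y: "\<forall>i<d. y i < (\<Prod>r<k. N i r)" "lin (\<lambda>i. \<Prod>r<k. N i r) y d = s"
    using lin_surj[OF assms] by blast
  have "\<forall>i. \<exists>xi. i < d \<longrightarrow> (\<forall>r<k. xi r < N i r) \<and> lin (N i) xi k = y i"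
    using y(1) lin_surj by blast
  then obtain x where x: "\<forall>i<d. (\<forall>r<k. x i r < N i r) \<and> lin (N i) (x i) k = y i"
    by metis
  have "nested_lin d k N x = s"
    unfolding nested_lin_def y(2)[symmetric] using x by (intro lin_cong) simp
  then show ?thesis using x by blast
qed

section \<open>Permutation matrices\<close>

lemma perm_matE:
  assumes "perm_mat N M"
  obtains \<pi> where "bij_betw \<pi> {..<N} {..<N}" "\<forall>s<N. \<forall>t<N. M s t = (if t = \<pi> s then 1 else 0)"
proof -
  note M = assms[unfolded perm_mat_def]
  have zero_one: "M s t = 0 \<or> M s t = 1" if "s < N" "t < N" for s t
    by (rule M[THEN conjunct1, rule_format, OF that])
  have row: "\<exists>!t. t < N \<and> M s t = 1" if "s < N" for s
    by (rule M[THEN conjunct2, THEN conjunct1, rule_format, OF that])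
  have col: "\<exists>!s. s < N \<and> M s t = 1" if "t < N" for t
    by (rule M[THEN conjunct2, THEN conjunct2, rule_format, OF that])
  define \<pi> where "\<pi> s = (THE t. t < N \<and> M s t = 1)" for s
  have \<pi>: "\<pi> s < N \<and> M s (\<pi> s) = 1" if "s < N" for s
    unfolding \<pi>_def by (rule theI'[OF row[OF that]])
  have \<pi>_unique: "t = \<pi> s" if "s < N" "t < N" "M s t = 1" for s t
    unfolding \<pi>_def by (rule the1_equality[OF row[OF that(1)], symmetric]) (use that in simp)
  have entries: "M s t = (if t = \<pi> s then 1 else 0)" if "s < N" "t < N" for s t
  proof (cases "t = \<pi> s")
    case False
    then show ?thesis using zero_one[OF that] \<pi>_unique[OF that] by auto
  qed (use \<pi>[OF that(1)] in simp)
  have "inj_on \<pi> {..<N}"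
  proof (rule inj_onI)
    fix s s' assume s: "s \<in> {..<N}" and s': "s' \<in> {..<N}" and eq: "\<pi> s = \<pi> s'"
    from s s' have "s < N" "s' < N" by simp_all
    then have "M s (\<pi> s) = 1" "M s' (\<pi> s) = 1" "\<pi> s < N" using \<pi>[of s] \<pi>[of s'] eq by simp_all
    then show "s = s'" using col[of "\<pi> s"] \<open>s < N\<close> \<open>s' < N\<close> by blast
  qed
  moreover have "\<pi> ` {..<N} \<subseteq> {..<N}" using \<pi> by auto
  ultimately have "bij_betw \<pi> {..<N} {..<N}"
    using endo_inj_surj[of "{..<N}" \<pi>] by (simp add: bij_betw_def)
  with entries show ?thesis using that by blast
qed

lemma perm_matI:
  assumes bij: "bij_betw \<pi> {..<N} {..<N}"
    and M: "\<forall>s<N. \<forall>t<N. M s t = (if t = \<pi> s then 1 else 0)"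
  shows "perm_mat N M"
proof -
  have \<pi>_less: "\<pi> s < N" if "s < N" for s using bij that by (auto simp: bij_betw_def)
  have "\<exists>!t. t < N \<and> M s t = 1" if "s < N" for s
    using M[rule_format, OF that] \<pi>_less[OF that] by (intro ex1I[of _ "\<pi> s"]) (auto split: if_splits)
  moreover have "\<exists>!s. s < N \<and> M s t = 1" if t: "t < N" for t
  proof -
    obtain s where s: "s < N" "t = \<pi> s" using bij t by (auto simp: bij_betw_def)
    have "s' = s" if s': "s' < N" "M s' t = 1" for s'
    proof -
      have "t = \<pi> s'" using M[rule_format, OF s'(1) t] s'(2) by (simp split: if_splits)
      then show ?thesis using bij s s'(1) by (auto simp: bij_betw_def inj_on_def)
    qed
    moreover have "M s t = 1" using M s t by simp
    ultimately show ?thesis using s(1) by blast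
  qed
  moreover have "M s t = 0 \<or> M s t = 1" if "s < N" "t < N" for s t using M that by simp
  ultimately show "perm_mat N M" unfolding perm_mat_def by blast
qed

lemma mat_vec_perm:
  assumes "bij_betw \<pi> {..<N} {..<N}" "\<forall>s<N. \<forall>t<N. Q s t = (if t = \<pi> s then 1 else 0)" "s < N"
  shows "mat_vec N Q v s = v (\<pi> s)"
proof -
  have "\<pi> s < N" using assms(1,3) by (auto simp: bij_betw_def)
  moreover have "mat_vec N Q v s = (\<Sum>t<N. if t = \<pi> s then v t else 0)"
    unfolding mat_vec_def using assms(2,3) by (intro sum.cong) auto
  ultimately show ?thesis by simp
qed

lemma perm_mat_Qmat: "perm_mat (\<Prod>i<d. \<Prod>r<k. N i r) (Qmat k d N)"
proof -
  define M where "M = (\<Prod>i<d. \<Prod>r<k. N i r)"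
  define box where "box x \<longleftrightarrow> (\<forall>i<d. \<forall>r<k. x i r < N i r)" for x :: "nat \<Rightarrow> nat \<Rightarrow> nat"
  define tr where "tr x = (\<lambda>r i. x i r)" for x :: "nat \<Rightarrow> nat \<Rightarrow> nat"
  define x0 where "x0 s = (SOME x. box x \<and> nested_lin d k N x = s)" for s
  define \<tau> where "\<tau> s = nested_lin k d (tr N) (tr (x0 s))" for s
  have x0: "box (x0 s) \<and> nested_lin d k N (x0 s) = s" if "s < M" for s
  proof -
    have "\<exists>x. box x \<and> nested_lin d k N x = s"
      using nested_lin_surj[where s = s and d = d and k = k and N = N] that unfolding M_def box_def .
    then show ?thesis unfolding x0_def by (rule someI_ex)
  qed
  have box_tr: "\<forall>r<k. \<forall>i<d. tr x r i < tr N r i" if "box x" for x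
    using that unfolding box_def tr_def by simp
  have "(\<Prod>r<k. \<Prod>i<d. tr N r i) = M" unfolding M_def tr_def by (rule prod.swap)
  then have \<tau>_less: "\<tau> s < M" if "s < M" for s
    using nested_lin_less[OF box_tr] x0[OF that] unfolding \<tau>_def by metis
  have "inj_on \<tau> {..<M}"
  proof (rule inj_onI)
    fix s s' assume "s \<in> {..<M}" "s' \<in> {..<M}" "\<tau> s = \<tau> s'"
    then have "\<forall>r<k. \<forall>i<d. tr (x0 s) r i = tr (x0 s') r i"
      using x0 box_tr unfolding \<tau>_def by (intro nested_lin_inj) simp_all
    then have "nested_lin d k N (x0 s) = nested_lin d k N (x0 s')"
      unfolding tr_def by (intro nested_lin_cong) simp
    then show "s = s'" using x0 \<open>s \<in> {..<M}\<close> \<open>s' \<in> {..<M}\<close> by simp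
  qed
  then have "bij_betw \<tau> {..<M} {..<M}"
    using endo_inj_surj[of "{..<M}" \<tau>] \<tau>_less by (auto simp: bij_betw_def)
  moreover have "Qmat k d N s t = (if t = \<tau> s then 1 else 0)" if "s < M" for s t
  proof -
    have "(\<exists>x. box x \<and> s = nested_lin d k N x \<and> t = nested_lin k d (tr N) (tr x)) \<longleftrightarrow> t = \<tau> s"
    proof
      assume "\<exists>x. box x \<and> s = nested_lin d k N x \<and> t = nested_lin k d (tr N) (tr x)"
      then obtain x where x: "box x" "s = nested_lin d k N x" "t = nested_lin k d (tr N) (tr x)"
        by blast
      have x0s: "box (x0 s)" "nested_lin d k N (x0 s) = s" using x0[OF that] by simp_all
      have "nested_lin d k N x = nested_lin d k N (x0 s)"
        using x0s(2) by (simp add: x(2)[symmetric])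
      then have "\<forall>i<d. \<forall>r<k. x i r = x0 s i r"
        using x(1) x0s(1) unfolding box_def by (intro nested_lin_inj)
      then show "t = \<tau> s" unfolding x(3) \<tau>_def tr_def by (intro nested_lin_cong) simp
    next
      assume "t = \<tau> s"
      then show "\<exists>x. box x \<and> s = nested_lin d k N x \<and> t = nested_lin k d (tr N) (tr x)"
        using x0[OF that] unfolding \<tau>_def by metis
    qed
    then show ?thesis unfolding Qmat_eq_nested_lin box_def tr_def by simp
  qed
  ultimately show ?thesis unfolding M_def[symmetric] by (blast intro: perm_matI)
qed

text \<open>Since Q Q^T = 1, the identity P = Q^T K Q gives Q P = K Q.\<close>

lemma mat_vec_fixed_conj:
  assumes Q: "perm_mat N Q"
    and fixed: "vec_eq N (mat_vec N P v) v"
    and conj: "mat_eq N P (mat_mul N (mat_transpose Q) (mat_mul N K Q))"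
  shows "vec_eq N (mat_vec N K (mat_vec N Q v)) (mat_vec N Q v)"
  unfolding vec_eq_def
proof (intro allI impI)
  obtain \<pi> where bij: "bij_betw \<pi> {..<N} {..<N}"
    and Q\<pi>: "\<forall>s<N. \<forall>t<N. Q s t = (if t = \<pi> s then 1 else 0)"
    using perm_matE[OF Q] by blast
  fix w assume w: "w < N"
  have \<pi>w: "\<pi> w < N" using bij w by (auto simp: bij_betw_def)
  have P_row: "P (\<pi> w) u = (\<Sum>z<N. K w z * Q z u)" if u: "u < N" for u
  proof -
    have "P (\<pi> w) u = (\<Sum>w'<N. Q w' (\<pi> w) * (\<Sum>z<N. K w' z * Q z u))"
      using conj \<pi>w u unfolding mat_eq_def mat_mul_def mat_transpose_def by simp
    also have "\<dots> = (\<Sum>w'<N. if w' = w then (\<Sum>z<N. K w' z * Q z u) else 0)"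
    proof (intro sum.cong refl)
      fix w' assume "w' \<in> {..<N}"
      then have "Q w' (\<pi> w) = (if w' = w then 1 else 0)"
        using Q\<pi> \<pi>w w bij by (auto simp: bij_betw_def inj_on_def)
      then show "Q w' (\<pi> w) * (\<Sum>z<N. K w' z * Q z u) = (if w' = w then \<Sum>z<N. K w' z * Q z u else 0)"
        by simp
    qed
    also have "\<dots> = (\<Sum>z<N. K w z * Q z u)" using w by simp
    finally show ?thesis .
  qed
  have "mat_vec N Q v w = v (\<pi> w)" by (rule mat_vec_perm[OF bij Q\<pi> w])
  also have "\<dots> = (\<Sum>u<N. P (\<pi> w) u * v u)"
    using fixed \<pi>w unfolding vec_eq_def mat_vec_def by simp
  also have "\<dots> = (\<Sum>u<N. \<Sum>z<N. K w z * (Q z u * v u))"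
    by (simp add: P_row sum_distrib_right mult.assoc)
  also have "\<dots> = mat_vec N K (mat_vec N Q v) w"
    unfolding mat_vec_def by (subst sum.swap) (simp add: sum_distrib_left)
  finally show "mat_vec N K (mat_vec N Q v) w = mat_vec N Q v w" by simp
qed

lemma inner_vec_mat_vec_perm:
  assumes "perm_mat M P"
  shows "inner_vec M (mat_vec M P a) (mat_vec M P a) = inner_vec M a a"
proof -
  obtain \<pi> where bij: "bij_betw \<pi> {..<M} {..<M}"
    and P\<pi>: "\<forall>s<M. \<forall>t<M. P s t = (if t = \<pi> s then 1 else 0)"
    using perm_matE[OF assms] by blast
  have "inner_vec M (mat_vec M P a) (mat_vec M P a) = (\<Sum>s<M. a (\<pi> s) * a (\<pi> s))"
    unfolding inner_vec_def using mat_vec_perm[OF bij P\<pi>] by simp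
  also have "\<dots> = inner_vec M a a"
    unfolding inner_vec_def by (rule sum.reindex_bij_betw[OF bij])
  finally show ?thesis .
qed

lemma sum_square_diff_eq:
  "(\<Sum>s<M. (a s - b s)\<^sup>2) = inner_vec M a a + inner_vec M b b - 2 * inner_vec M a b"
  unfolding inner_vec_def power2_diff
  by (simp add: sum.distrib sum_subtractf sum_distrib_left power2_eq_square mult.assoc)

lemma sum_square_add_eq:
  "(\<Sum>s<M. (a s + b s)\<^sup>2) = inner_vec M a a + inner_vec M b b + 2 * inner_vec M a b"
  unfolding inner_vec_def power2_sum
  by (simp add: sum.distrib sum_distrib_left power2_eq_square mult.assoc)

lemma sum_squares_eq_0_iff: "(\<Sum>s<(M::nat). (x s)\<^sup>2) = (0::real) \<longleftrightarrow> (\<forall>s<M. x s = 0)"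
  by (subst sum_nonneg_eq_0_iff) auto

lemma abs_inner_mat_vec_perm_le:
  assumes "perm_mat M P" "inner_vec M a a = 1"
  shows "\<bar>inner_vec M a (mat_vec M P a)\<bar> \<le> 1"
proof -
  have "0 \<le> (\<Sum>s<M. (a s - mat_vec M P a s)\<^sup>2)" "0 \<le> (\<Sum>s<M. (a s + mat_vec M P a s)\<^sup>2)"
    by (simp_all add: sum_nonneg)
  then show ?thesis
    unfolding sum_square_diff_eq sum_square_add_eq inner_vec_mat_vec_perm[OF assms(1)] assms(2)
    by linarith
qed

lemma inner_mat_vec_perm_eq_1_iff:
  assumes "perm_mat M P" "inner_vec M a a = 1"
  shows "inner_vec M a (mat_vec M P a) = 1 \<longleftrightarrow> vec_eq M (mat_vec M P a) a"
proof -
  have "inner_vec M a (mat_vec M P a) = 1 \<longleftrightarrow> (\<Sum>s<M. (a s - mat_vec M P a s)\<^sup>2) = 0"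
    unfolding sum_square_diff_eq inner_vec_mat_vec_perm[OF assms(1)] assms(2) by linarith
  then show ?thesis unfolding sum_squares_eq_0_iff vec_eq_def by auto
qed

lemma inner_mat_vec_perm_eq_neg1_iff:
  assumes "perm_mat M P" "inner_vec M a a = 1"
  shows "inner_vec M a (mat_vec M P a) = -1 \<longleftrightarrow> vec_eq M (mat_vec M P a) (\<lambda>s. - a s)"
proof -
  have "inner_vec M a (mat_vec M P a) = -1 \<longleftrightarrow> (\<Sum>s<M. (a s + mat_vec M P a s)\<^sup>2) = 0"
    unfolding sum_square_add_eq inner_vec_mat_vec_perm[OF assms(1)] assms(2) by linarith
  then show ?thesis unfolding sum_squares_eq_0_iff vec_eq_def by (auto simp: add_eq_0_iff)
qed

lemma prod_abs_le_1_eq_1_imp_abs_eq_1: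
  fixes c :: "'a \<Rightarrow> real"
  assumes "finite A" "\<forall>i\<in>A. \<bar>c i\<bar> \<le> 1" "prod c A = 1" "i \<in> A"
  shows "\<bar>c i\<bar> = 1"
proof (rule ccontr)
  assume "\<bar>c i\<bar> \<noteq> 1"
  then have "\<bar>c i\<bar> < 1" using assms(2,4) by force
  have "1 = (\<Prod>i\<in>A. \<bar>c i\<bar>)" using assms(3) by (simp add: abs_prod[symmetric])
  also have "\<dots> = \<bar>c i\<bar> * (\<Prod>i\<in>A - {i}. \<bar>c i\<bar>)" using assms(1,4) by (simp add: prod.remove)
  also have "\<dots> \<le> \<bar>c i\<bar>" using assms(2) by (intro mult_left_le prod_le_1) auto
  finally show False using \<open>\<bar>c i\<bar> < 1\<close> by simp
qed

lemma prod_pm1_eq_power_card: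
  fixes c :: "'a \<Rightarrow> real"
  assumes "finite A" "\<forall>i\<in>A. c i = 1 \<or> c i = -1"
  shows "prod c A = (-1) ^ card {i\<in>A. c i = -1}"
proof -
  have "prod c A = (\<Prod>i\<in>A. if c i = -1 then -1 else 1)"
    using assms(2) by (intro prod.cong) auto
  also have "\<dots> = (-1) ^ card (A \<inter> {i. c i = -1})"
    using assms(1) by (simp add: prod.If_cases)
  finally show ?thesis by (simp add: Int_def conj_commute)
qed

lemma perm_mat_factors_sym_or_skew:
  fixes d :: nat
  assumes perm: "\<forall>i<d. perm_mat (M i) (Ps i)"
    and unit: "\<forall>i<d. inner_vec (M i) (a i) (a i) = 1"
    and prod_one: "(\<Prod>i<d. inner_vec (M i) (a i) (mat_vec (M i) (Ps i) (a i))) = 1"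
  shows "(\<forall>i<d. vec_eq (M i) (mat_vec (M i) (Ps i) (a i)) (a i) \<or>
                vec_eq (M i) (mat_vec (M i) (Ps i) (a i)) (\<lambda>s. - a i s)) \<and>
         even (card {i. i < d \<and> vec_eq (M i) (mat_vec (M i) (Ps i) (a i)) (\<lambda>s. - a i s)})"
proof -
  define c where "c i = inner_vec (M i) (a i) (mat_vec (M i) (Ps i) (a i))" for i
  have pm1: "\<forall>i\<in>{..<d}. c i = 1 \<or> c i = -1"
  proof
    fix i assume "i \<in> {..<d}"
    then have "\<bar>c i\<bar> = 1"
      using perm unit prod_one abs_inner_mat_vec_perm_le unfolding c_def
      by (intro prod_abs_le_1_eq_1_imp_abs_eq_1[where A = "{..<d}"]) auto
    then show "c i = 1 \<or> c i = -1" by (cases "c i \<ge> 0") auto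
  qed
  have skew_iff: "vec_eq (M i) (mat_vec (M i) (Ps i) (a i)) (\<lambda>s. - a i s) \<longleftrightarrow> c i = -1" if "i < d" for i
    unfolding c_def by (rule inner_mat_vec_perm_eq_neg1_iff[symmetric]) (use perm unit that in auto)
  have sym_iff: "vec_eq (M i) (mat_vec (M i) (Ps i) (a i)) (a i) \<longleftrightarrow> c i = 1" if "i < d" for i
    unfolding c_def by (rule inner_mat_vec_perm_eq_1_iff[symmetric]) (use perm unit that in auto)
  have "{i. i < d \<and> vec_eq (M i) (mat_vec (M i) (Ps i) (a i)) (\<lambda>s. - a i s)} = {i\<in>{..<d}. c i = -1}"
    using skew_iff by auto
  moreover have "(-1::real) ^ card {i\<in>{..<d}. c i = -1} = 1"
    using prod_pm1_eq_power_card[OF _ pm1] prod_one unfolding c_def by simp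
  ultimately show ?thesis using pm1 sym_iff skew_iff by (auto simp: minus_one_power_iff split: if_splits)
qed

section \<open>Kronecker products and rank-one terms\<close>

lemma kron_list_lin:
  assumes "\<forall>i<d. l i < M i" "\<forall>i<d. l' i < M i"
  shows "kron_list M Ps d (lin M l d) (lin M l' d) = (\<Prod>i<d. Ps i (l i) (l' i))"
  using assms
proof (induction d)
  case 0 then show ?case by (simp add: lin_def)
next
  case (Suc d)
  define P where "P = (\<Prod>u<d. M u)"
  have "lin M l d < P" "lin M l' d < P"
    using Suc.prems by (auto intro!: lin_less_prod simp: P_def)
  then show ?case using Suc by (simp add: lin_Suc kron_def P_def[symmetric])
qed

lemma kron_list_fixed_PiE:
  assumes fixed: "vec_eq (\<Prod>i<d. M i) (mat_vec (\<Prod>i<d. M i) (kron_list M Ps d) q) q"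
    and l: "l \<in> (\<Pi>\<^sub>E i\<in>{..<d}. {..<M i})"
  shows "(\<Sum>l'\<in>(\<Pi>\<^sub>E i\<in>{..<d}. {..<M i}). (\<Prod>i<d. Ps i (l i) (l' i)) * q (lin M l' d)) = q (lin M l d)"
proof -
  have "(\<Sum>l'\<in>(\<Pi>\<^sub>E i\<in>{..<d}. {..<M i}). (\<Prod>i<d. Ps i (l i) (l' i)) * q (lin M l' d)) =
      (\<Sum>l'\<in>(\<Pi>\<^sub>E i\<in>{..<d}. {..<M i}). kron_list M Ps d (lin M l d) (lin M l' d) * q (lin M l' d))"
  proof (intro sum.cong refl)
    fix l' assume "l' \<in> (\<Pi>\<^sub>E i\<in>{..<d}. {..<M i})"
    then have "kron_list M Ps d (lin M l d) (lin M l' d) = (\<Prod>i<d. Ps i (l i) (l' i))"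
      using l by (intro kron_list_lin) auto
    then show "(\<Prod>i<d. Ps i (l i) (l' i)) * q (lin M l' d) =
        kron_list M Ps d (lin M l d) (lin M l' d) * q (lin M l' d)" by simp
  qed
  also have "\<dots> = (\<Sum>z<(\<Prod>i<d. M i). kron_list M Ps d (lin M l d) z * q z)"
    by (rule sum.reindex_bij_betw[OF bij_betw_lin])
  also have "\<dots> = q (lin M l d)"
    using fixed bij_betw_apply[OF bij_betw_lin l] unfolding vec_eq_def mat_vec_def by simp
  finally show ?thesis .
qed

definition outer_prod :: "nat \<Rightarrow> (nat \<Rightarrow> rvec) \<Rightarrow> (nat \<Rightarrow> nat) \<Rightarrow> real" where
  "outer_prod d a l = (\<Prod>i<d. a i (l i))"

lemma sum_outer_prod_mult:
  "(\<Sum>l\<in>(\<Pi>\<^sub>E i\<in>{..<d}. {..<M i}). outer_prod d a l * outer_prod d b l) =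
     (\<Prod>i<d. inner_vec (M i) (a i) (b i))"
  unfolding outer_prod_def inner_vec_def
  by (simp add: prod_sum_PiE prod.distrib[symmetric])

lemma sum_outer_prod_kron:
  "(\<Sum>l\<in>(\<Pi>\<^sub>E i\<in>{..<d}. {..<M i}). \<Sum>l'\<in>(\<Pi>\<^sub>E i\<in>{..<d}. {..<M i}).
       outer_prod d a l * (\<Prod>i<d. Ps i (l i) (l' i)) * outer_prod d b l') =
     (\<Prod>i<d. inner_vec (M i) (a i) (mat_vec (M i) (Ps i) (b i)))"
proof -
  have "(\<Sum>l'\<in>(\<Pi>\<^sub>E i\<in>{..<d}. {..<M i}). outer_prod d a l * (\<Prod>i<d. Ps i (l i) (l' i)) * outer_prod d b l')
      = (\<Prod>i<d. \<Sum>t<M i. a i (l i) * Ps i (l i) t * b i t)" for l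
    unfolding outer_prod_def by (simp add: prod_sum_PiE prod.distrib[symmetric])
  then show ?thesis
    unfolding inner_vec_def mat_vec_def
    by (simp add: prod_sum_PiE sum_distrib_left mult.assoc)
qed

lemma sum_outer_prod_orthogonal_decomp:
  fixes d R :: nat
  assumes orth: "\<forall>j<R. \<forall>j'<R. j \<noteq> j' \<longrightarrow>
        (\<Sum>l\<in>(\<Pi>\<^sub>E i\<in>{..<d}. {..<M i}).
           (\<sigma> j * outer_prod d (\<lambda>i. a i j) l) * (\<sigma> j' * outer_prod d (\<lambda>i. a i j') l)) = 0"
    and sigma_nz: "\<forall>j<R. \<sigma> j \<noteq> 0"
    and unit: "\<forall>i<d. \<forall>j<R. inner_vec (M i) (a i j) (a i j) = 1"
    and j0: "j0 < R"
  shows "(\<Sum>l\<in>(\<Pi>\<^sub>E i\<in>{..<d}. {..<M i}).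
            outer_prod d (\<lambda>i. a i j0) l * (\<Sum>j<R. \<sigma> j * outer_prod d (\<lambda>i. a i j) l)) = \<sigma> j0"
proof -
  define I where "I = (\<Pi>\<^sub>E i\<in>{..<d}. {..<M i})"
  have gram: "(\<Sum>l\<in>I. outer_prod d (\<lambda>i. a i j0) l * outer_prod d (\<lambda>i. a i j) l) =
      (if j = j0 then 1 else 0)" if j: "j < R" for j
  proof (cases "j = j0")
    case True
    then show ?thesis using unit j unfolding I_def sum_outer_prod_mult by simp
  next
    case False
    then have "\<sigma> j0 * \<sigma> j * (\<Sum>l\<in>I. outer_prod d (\<lambda>i. a i j0) l * outer_prod d (\<lambda>i. a i j) l) = 0"
      using orth j0 j unfolding I_def by (simp add: sum_distrib_left mult_ac)
    then show ?thesis using sigma_nz j0 j False by simp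
  qed
  have "(\<Sum>l\<in>I. outer_prod d (\<lambda>i. a i j0) l * (\<Sum>j<R. \<sigma> j * outer_prod d (\<lambda>i. a i j) l)) =
      (\<Sum>j<R. \<sigma> j * (\<Sum>l\<in>I. outer_prod d (\<lambda>i. a i j0) l * outer_prod d (\<lambda>i. a i j) l))"
    by (simp add: sum_distrib_left sum.swap[of _ I] mult_ac)
  also have "\<dots> = (\<Sum>j<R. if j = j0 then \<sigma> j else 0)" by (intro sum.cong refl) (simp add: gram)
  also have "\<dots> = \<sigma> j0" using j0 by simp
  finally show ?thesis unfolding I_def .
qed

lemma sum_outer_prod_kron_fixed:
  fixes d R :: nat
  assumes fixed: "\<forall>l\<in>(\<Pi>\<^sub>E i\<in>{..<d}. {..<M i}).
        (\<Sum>l'\<in>(\<Pi>\<^sub>E i\<in>{..<d}. {..<M i}). (\<Prod>i<d. Ps i (l i) (l' i)) * X l') = X l"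
    and X: "\<forall>l\<in>(\<Pi>\<^sub>E i\<in>{..<d}. {..<M i}). X l = (\<Sum>j<R. \<sigma> j * outer_prod d (\<lambda>i. a i j) l)"
    and cond: "\<forall>j<R. j \<noteq> j0 \<longrightarrow>
        \<sigma> j * (\<Prod>i<d. inner_vec (M i) (a i j0) (mat_vec (M i) (Ps i) (a i j))) = 0"
    and j0: "j0 < R"
  shows "(\<Sum>l\<in>(\<Pi>\<^sub>E i\<in>{..<d}. {..<M i}). outer_prod d (\<lambda>i. a i j0) l * X l) =
     \<sigma> j0 * (\<Prod>i<d. inner_vec (M i) (a i j0) (mat_vec (M i) (Ps i) (a i j0)))"
proof -
  define I where "I = (\<Pi>\<^sub>E i\<in>{..<d}. {..<M i})"
  define K where "K l l' = (\<Prod>i<d. Ps i (l i) (l' i))" for l l' :: "nat \<Rightarrow> nat"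
  have "(\<Sum>l\<in>I. outer_prod d (\<lambda>i. a i j0) l * X l) =
      (\<Sum>l\<in>I. \<Sum>l'\<in>I. outer_prod d (\<lambda>i. a i j0) l * K l l' * X l')"
  proof (intro sum.cong refl)
    fix l assume "l \<in> I"
    then have "X l = (\<Sum>l'\<in>I. K l l' * X l')" using fixed unfolding I_def K_def by simp
    then show "outer_prod d (\<lambda>i. a i j0) l * X l =
        (\<Sum>l'\<in>I. outer_prod d (\<lambda>i. a i j0) l * K l l' * X l')"
      by (simp add: sum_distrib_left mult.assoc)
  qed
  also have "\<dots> = (\<Sum>j<R. \<sigma> j *
      (\<Sum>l\<in>I. \<Sum>l'\<in>I. outer_prod d (\<lambda>i. a i j0) l * K l l' * outer_prod d (\<lambda>i. a i j) l'))"
    using X unfolding I_def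
    by (simp add: sum_distrib_left sum.swap[of _ "{..<R}"] mult_ac cong: sum.cong)
  also have "\<dots> = (\<Sum>j<R. \<sigma> j * (\<Prod>i<d. inner_vec (M i) (a i j0) (mat_vec (M i) (Ps i) (a i j))))"
    unfolding I_def K_def sum_outer_prod_kron ..
  also have "\<dots> = \<sigma> j0 * (\<Prod>i<d. inner_vec (M i) (a i j0) (mat_vec (M i) (Ps i) (a i j0)))"
    using cond j0 by (subst sum.remove[of _ j0]) (simp_all add: sum.neutral)
  finally show ?thesis unfolding I_def .
qed

theorem theorem2:
  fixes k n d R :: nat
    and vA :: rvec
    and P :: rmat
    and m :: "nat \<Rightarrow> nat"
    and Ps :: "nat \<Rightarrow> rmat"
    and \<sigma> :: "nat \<Rightarrow> real"
    and a :: "nat \<Rightarrow> nat \<Rightarrow> rvec"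
  assumes P_perm: "perm_mat (n ^ k) P"
    and P_gen: "general_symmetry k n P"
    and A_sym: "vec_eq (n ^ k) (mat_vec (n ^ k) P vA) vA"
    and m_prod: "(\<Prod>i<d. m i) = n"
    and Ps_perm: "\<forall>i<d. perm_mat (m i ^ k) (Ps i)"
    and P_split: "mat_eq (n ^ k) P
            (mat_mul (n ^ k) (mat_transpose (Qmat k d (\<lambda>i r. m i)))
               (mat_mul (n ^ k) (kron_list (\<lambda>i. m i ^ k) Ps d) (Qmat k d (\<lambda>i r. m i))))"
    and decomp: "\<forall>l \<in> (\<Pi>\<^sub>E i\<in>{..<d}. {..<m i ^ k}).
            mat_vec (n ^ k) (Qmat k d (\<lambda>i r. m i)) vA (lin (\<lambda>i. m i ^ k) l d)
              = (\<Sum>j<R. \<sigma> j * (\<Prod>i<d. a i j (l i)))"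
    and sigma_nz: "\<forall>j<R. \<sigma> j \<noteq> 0"
    and unit: "\<forall>i<d. \<forall>j<R. inner_vec (m i ^ k) (a i j) (a i j) = 1"
    and orth: "\<forall>j<R. \<forall>j'<R. j \<noteq> j' \<longrightarrow>
            (\<Sum>l \<in> (\<Pi>\<^sub>E i\<in>{..<d}. {..<m i ^ k}).
               (\<sigma> j * (\<Prod>i<d. a i j (l i))) * (\<sigma> j' * (\<Prod>i<d. a i j' (l i)))) = 0"
    and cond1_distinct: "inj_on \<sigma> {..<R}"
    and cond1: "\<forall>l<R. \<forall>j<R. j \<noteq> l \<longrightarrow>
            \<sigma> j * (\<Prod>i<d. inner_vec (m i ^ k) (a i l) (mat_vec (m i ^ k) (Ps i) (a i j))) = 0"
  shows "\<forall>j<R.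
           (\<forall>i<d. vec_eq (m i ^ k) (mat_vec (m i ^ k) (Ps i) (a i j)) (a i j) \<or>
                  vec_eq (m i ^ k) (mat_vec (m i ^ k) (Ps i) (a i j)) (\<lambda>s. - a i j s)) \<and>
           (card {i. i < d \<and> vec_eq (m i ^ k) (mat_vec (m i ^ k) (Ps i) (a i j)) (\<lambda>s. - a i j s)} = 0
            \<or> even (card {i. i < d \<and> vec_eq (m i ^ k) (mat_vec (m i ^ k) (Ps i) (a i j)) (\<lambda>s. - a i j s)}))"
proof -
  define I where "I = (\<Pi>\<^sub>E i\<in>{..<d}. {..<m i ^ k})"
  define Q where "Q = Qmat k d (\<lambda>i r. m i)"
  define X where "X l = mat_vec (n ^ k) Q vA (lin (\<lambda>i. m i ^ k) l d)" for l
  have n_pow: "n ^ k = (\<Prod>i<d. m i ^ k)" "n ^ k = (\<Prod>i<d. \<Prod>r<k. m i)"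
    unfolding m_prod[symmetric] by (simp_all add: prod_power_distrib)
  have "perm_mat (n ^ k) Q" unfolding Q_def n_pow(2) by (rule perm_mat_Qmat)
  then have "vec_eq (n ^ k) (mat_vec (n ^ k) (kron_list (\<lambda>i. m i ^ k) Ps d) (mat_vec (n ^ k) Q vA))
      (mat_vec (n ^ k) Q vA)"
    using A_sym P_split unfolding Q_def by (rule mat_vec_fixed_conj)
  then have X_fixed: "\<forall>l\<in>I. (\<Sum>l'\<in>I. (\<Prod>i<d. Ps i (l i) (l' i)) * X l') = X l"
    unfolding I_def X_def n_pow(1) by (auto intro: kron_list_fixed_PiE)
  have X_decomp: "\<forall>l\<in>I. X l = (\<Sum>j<R. \<sigma> j * outer_prod d (\<lambda>i. a i j) l)"
    using decomp unfolding I_def X_def Q_def outer_prod_def by simp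
  have prod_one: "(\<Prod>i<d. inner_vec (m i ^ k) (a i j) (mat_vec (m i ^ k) (Ps i) (a i j))) = 1"
    if j: "j < R" for j
  proof -
    have "(\<Sum>l\<in>I. outer_prod d (\<lambda>i. a i j) l * X l) =
        (\<Sum>l\<in>I. outer_prod d (\<lambda>i. a i j) l * (\<Sum>j<R. \<sigma> j * outer_prod d (\<lambda>i. a i j) l))"
      using X_decomp by simp
    also have "\<dots> = \<sigma> j" unfolding I_def
      by (rule sum_outer_prod_orthogonal_decomp)
        (use orth sigma_nz unit j in \<open>simp_all add: outer_prod_def\<close>)
    finally have "(\<Sum>l\<in>I. outer_prod d (\<lambda>i. a i j) l * X l) = \<sigma> j" .
    moreover have "(\<Sum>l\<in>I. outer_prod d (\<lambda>i. a i j) l * X l) =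
        \<sigma> j * (\<Prod>i<d. inner_vec (m i ^ k) (a i j) (mat_vec (m i ^ k) (Ps i) (a i j)))"
      unfolding I_def by (rule sum_outer_prod_kron_fixed[OF X_fixed[unfolded I_def] X_decomp[unfolded I_def]])
        (use cond1 j in auto)
    ultimately show ?thesis using sigma_nz j by simp
  qed
  show ?thesis
    using perm_mat_factors_sym_or_skew[where M = "\<lambda>i. m i ^ k" and a = "\<lambda>i. a i j" for j]
      Ps_perm unit prod_one by auto
qed

end
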